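(* Let $G=(V,E)$ be an $n$-node graph, $\mathcal{C}$ a clustering of $G$ produced by $\mathbf{cluster}(G,e)$ for some integer $e\ge 1$, and $d,m$ positive integers. Let $H$ be the subgraph of $G$ on vertex set $V$ containing exactly the edges of $\mathbf{multspan}(G)$ and the edges of the paths in $\mathcal{S} = \mathbf{createStrips}(G, \mathcal{C}, d, m)$. Let $u,v\in V$ be such that $\rho_G(u,v)$ intersects exactly $k$ clean clusters and fewer than $\frac{k}{2}$ strips. Then $\delta_G(u,v) \ge \Omega\!\left(\frac{kd}{m}\right)$.
   Context: $G$ is unweighted and undirected; $\delta_G$ is shortest-path distance; the constant in $\Omega(\cdot)$ is absolute. For each pair of nodes $u,v$ a shortest path $\rho_G(u,v)$ is fixed, the choice being consistent and such that any two chosen shortest paths intersect on at most one (contiguous) subpath. $\mathbf{multspan}(G)$ is the subgraph produced by the greedy multiplicative spanner algorithm of Althöfer et al. with parameter $\log n$ ($O(n)$ edges, multiplicative stretch $2\log n -1$). The procedure $\mathbf{cluster}(G,e)$: initialize $\mathcal{C} = \emptyset$, unmark all nodes; while there is an unmarked node $u$ with at least $e-1$ unmarked neighbors, let $C$ be $u$ together with any $e-1$ of its unmarked neighbors, mark all nodes of $C$, add $C$ to $\mathcal{C}$; return $\mathcal{C}$. Elements of $\mathcal{C}$ are clusters. The procedure $\mathbf{createStrips}(G,\mathcal{C},d,m)$: initialize $\mathcal{S}=\emptyset$; while there exist $u,v \in V$ such that (1) $\delta_G(u,v) \le d$, (2) $\rho_G(u,v)$ intersects (shares a node with) at most $m$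 different paths in $\mathcal{S}$, and (3) $\rho_G(u,v)$ intersects exactly $m$ clusters that share no node with any path in $\mathcal{S}$, add $\rho_G(u,v)$ to $\mathcal{S}$; return $\mathcal{S}$. The paths in $\mathcal{S}$ are strips. A cluster is clean if it shares no node with any strip. A path intersects a strip or cluster if they share a node.
   Formalization: The positive integer m is also at most k, the number of clean clusters that $\rho_G(u,v)$ intersects. The statement above fails without it. *)

theory Defs
  imports Main "HOL-Library.Extended_Nat"
begin

definition sgraph :: "nat set \<Rightarrow> (nat \<Rightarrow> nat \<Rightarrow> bool) \<Rightarrow> bool" where
  "sgraph V E \<longleftrightarrow> finite V \<and> (\<forall>x y. E x y \<longrightarrow> x \<in> V \<and> y \<in> V \<and> x \<noteq> y \<and> E y x)"

definition walk :: "nat set \<Rightarrow> (nat \<Rightarrow> nat \<Rightarrow> bool) \<Rightarrow> nat list \<Rightarrow> bool" where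
  "walk V E xs \<longleftrightarrow> xs \<noteq> [] \<and> set xs \<subseteq> V \<and> (\<forall>i. Suc i < length xs \<longrightarrow> E (xs ! i) (xs ! Suc i))"

text \<open>Shortest-path distance (infinity if not connected).\<close>
definition gdist :: "nat set \<Rightarrow> (nat \<Rightarrow> nat \<Rightarrow> bool) \<Rightarrow> nat \<Rightarrow> nat \<Rightarrow> enat" where
  "gdist V E u v = (INF xs \<in> {xs. walk V E xs \<and> hd xs = u \<and> last xs = v}. enat (length xs - 1))"

text \<open>The fixed family of shortest paths rho(u,v): shortest paths, consistent (subpaths of chosen
  paths are the chosen paths, and rho(v,u) is rho(u,v) reversed), and any two chosen paths
  intersect in at most one contiguous subpath.\<close>
definition sp_system :: "nat set \<Rightarrow> (nat \<Rightarrow> nat \<Rightarrow> bool) \<Rightarrow> (nat \<Rightarrow> nat \<Rightarrow> nat list) \<Rightarrow> bool" where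
  "sp_system V E rho \<longleftrightarrow>
     (\<forall>u\<in>V. \<forall>v\<in>V. gdist V E u v \<noteq> \<infinity> \<longrightarrow>
        walk V E (rho u v) \<and> hd (rho u v) = u \<and> last (rho u v) = v \<and>
        enat (length (rho u v) - 1) = gdist V E u v \<and>
        rho v u = rev (rho u v) \<and>
        (\<forall>i j. i \<le> j \<and> j < length (rho u v) \<longrightarrow>
           rho (rho u v ! i) (rho u v ! j) = take (Suc (j - i)) (drop i (rho u v))) \<and>
        (\<forall>x\<in>V. \<forall>y\<in>V. gdist V E x y \<noteq> \<infinity> \<longrightarrow>
           (\<exists>i j. set (rho u v) \<inter> set (rho x y) = {rho u v ! l | l. i \<le> l \<and> l < j})))"

text \<open>Possible outputs of the nondeterministic procedure cluster(G,e): the list of clusters in the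
  order they are created; marked nodes are those in earlier clusters.\<close>
definition cluster_output :: "nat set \<Rightarrow> (nat \<Rightarrow> nat \<Rightarrow> bool) \<Rightarrow> nat \<Rightarrow> nat set set \<Rightarrow> bool" where
  "cluster_output V E e Cs \<longleftrightarrow> (\<exists>cl.
     (\<forall>i < length cl. \<exists>u N.
        u \<in> V - \<Union>(set (take i cl)) \<and>
        N \<subseteq> {w \<in> V. E u w} - \<Union>(set (take i cl)) \<and> card N = e - 1 \<and>
        cl ! i = insert u N) \<and>
     \<not> (\<exists>u \<in> V - \<Union>(set cl). card ({w \<in> V. E u w} - \<Union>(set cl)) \<ge> e - 1) \<and>
     Cs = set cl)"

definition strip_addable ::
  "nat set \<Rightarrow> (nat \<Rightarrow> nat \<Rightarrow> bool) \<Rightarrow> (nat \<Rightarrow> nat \<Rightarrow> nat list) \<Rightarrow> nat set set \<Rightarrow> nat \<Rightarrow> nat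
    \<Rightarrow> nat list set \<Rightarrow> nat \<Rightarrow> nat \<Rightarrow> bool" where
  "strip_addable V E rho Cs d m S u v \<longleftrightarrow>
     u \<in> V \<and> v \<in> V \<and> gdist V E u v \<le> enat d \<and>
     card {P \<in> S. set (rho u v) \<inter> set P \<noteq> {}} \<le> m \<and>
     card {C \<in> Cs. C \<inter> set (rho u v) \<noteq> {} \<and> (\<forall>P\<in>S. C \<inter> set P = {})} = m"

text \<open>Possible outputs of the nondeterministic procedure createStrips(G,C,d,m).\<close>
definition strips_output ::
  "nat set \<Rightarrow> (nat \<Rightarrow> nat \<Rightarrow> bool) \<Rightarrow> (nat \<Rightarrow> nat \<Rightarrow> nat list) \<Rightarrow> nat set set \<Rightarrow> nat \<Rightarrow> nat
    \<Rightarrow> nat list set \<Rightarrow> bool" where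
  "strips_output V E rho Cs d m S \<longleftrightarrow> (\<exists>sl.
     (\<forall>i < length sl. \<exists>u v. strip_addable V E rho Cs d m (set (take i sl)) u v \<and> sl ! i = rho u v) \<and>
     \<not> (\<exists>u v. strip_addable V E rho Cs d m (set sl) u v) \<and>
     S = set sl)"

definition clean :: "nat list set \<Rightarrow> nat set \<Rightarrow> bool" where
  "clean S C \<longleftrightarrow> (\<forall>P\<in>S. C \<inter> set P = {})"

end

theory Submission
  imports Defs "HOL-Library.Disjoint_Sets"
begin

(* Cut rho(u,v) greedily into consecutive segments, each ending at the node where it meets its
   m-th clean cluster.  Clean clusters avoid all strips and strips meet rho(u,v) contiguously,
   so different segments meet different strips.  A segment meeting at most m strips spans more
   than d edges, since otherwise createStrips could still add it; every other segment uses up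
   more than m of the fewer than k/2 strips.  Hence about k/(2m) segments are long, which gives
   k d <= 4 m delta(u,v). *)

definition clusters_on :: "'a set set \<Rightarrow> (nat \<Rightarrow> 'a) \<Rightarrow> nat \<Rightarrow> nat \<Rightarrow> 'a set set" where
  "clusters_on Cl p a b = {C \<in> Cl. C \<inter> p ` {a..<b} \<noteq> {}}"

definition strips_on :: "'a list set \<Rightarrow> (nat \<Rightarrow> 'a) \<Rightarrow> nat \<Rightarrow> nat \<Rightarrow> 'a list set" where
  "strips_on St p a b = {P \<in> St. set P \<inter> p ` {a..<b} \<noteq> {}}"

lemma clusters_on_empty: "b \<le> a \<Longrightarrow> clusters_on Cl p a b = {}"
  by (simp add: clusters_on_def)

lemma clusters_on_split:
  assumes "a \<le> j" "j \<le> b"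
  shows "clusters_on Cl p a b = clusters_on Cl p a j \<union> clusters_on Cl p j b"
proof -
  have "{a..<b} = {a..<j} \<union> {j..<b}" using assms by auto
  then show ?thesis unfolding clusters_on_def by blast
qed

lemma clusters_on_Suc:
  "a \<le> t \<Longrightarrow> clusters_on Cl p a (Suc t) = clusters_on Cl p a t \<union> {C \<in> Cl. p t \<in> C}"
  unfolding clusters_on_def by (auto simp: atLeastLessThanSuc)

lemma card_clusters_on_Suc_le:
  assumes "finite Cl" "disjoint Cl" "a \<le> t"
  shows "card (clusters_on Cl p a (Suc t)) \<le> Suc (card (clusters_on Cl p a t))"
proof -
  have "card {C \<in> Cl. p t \<in> C} \<le> 1"
    using assms(1,2) by (auto simp: card_le_Suc0_iff_eq disjnt_iff dest: pairwiseD)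
  then show ?thesis
    using assms(1,3) card_Un_le[of "clusters_on Cl p a t" "{C \<in> Cl. p t \<in> C}"]
    by (simp add: clusters_on_Suc)
qed

lemma exists_prefix_meeting_clusters:
  assumes "finite Cl" "disjoint Cl" "0 < c" "c \<le> card (clusters_on Cl p a b)"
  shows "\<exists>t. a \<le> t \<and> t < b \<and> card (clusters_on Cl p a (Suc t)) = c \<and> p t \<in> \<Union>Cl"
  using assms(4)
proof (induction b)
  case 0
  then show ?case using assms(3) by (simp add: clusters_on_empty)
next
  case (Suc b)
  show ?case
  proof (cases "c \<le> card (clusters_on Cl p a b)")
    case True
    then show ?thesis using Suc.IH less_SucI by blast
  next
    case False
    have "a \<le> b"
      using Suc.prems assms(3) by (cases "a \<le> b") (auto simp: clusters_on_empty)
    moreover have "p b \<in> \<Union>Cl"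
    proof (rule ccontr)
      assume "p b \<notin> \<Union>Cl"
      then have "clusters_on Cl p a (Suc b) = clusters_on Cl p a b"
        using \<open>a \<le> b\<close> by (auto simp: clusters_on_Suc)
      then show False using False Suc.prems by simp
    qed
    moreover have "card (clusters_on Cl p a (Suc b)) = c"
      using False Suc.prems card_clusters_on_Suc_le[OF assms(1,2) \<open>a \<le> b\<close>, of p] by simp
    ultimately show ?thesis by blast
  qed
qed

text \<open>Abstracts \<open>\<rho>(u,v)\<close> with nodes \<open>p 0, \<dots>, p (n - 1)\<close>, the clean clusters \<open>Cl\<close> and the
  strips \<open>St\<close>; \<open>saturated\<close> expresses that createStrips has terminated.\<close>
locale saturated_path =
  fixes p :: "nat \<Rightarrow> 'a" and n :: nat and Cl :: "'a set set" and St :: "'a list set"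
    and m d :: nat
  assumes finite_Cl: "finite Cl" and disjoint_Cl: "disjoint Cl" and finite_St: "finite St"
    and clusters_avoid_strips: "\<And>C P. C \<in> Cl \<Longrightarrow> P \<in> St \<Longrightarrow> C \<inter> set P = {}"
    and strips_contiguous: "\<And>P x y z. P \<in> St \<Longrightarrow> x < y \<Longrightarrow> y < z \<Longrightarrow> z < n \<Longrightarrow>
      p x \<in> set P \<Longrightarrow> p z \<in> set P \<Longrightarrow> p y \<in> set P"
    and saturated: "\<And>a b. a < b \<Longrightarrow> b \<le> n \<Longrightarrow> card (clusters_on Cl p a b) = m \<Longrightarrow>
      card (strips_on St p a b) \<le> m \<Longrightarrow> d + 2 \<le> b - a"
    and m_pos: "0 < m"
begin

lemma card_strips_on_separated:
  assumes "a \<le> t" "t < b" "b \<le> n" "p t \<in> \<Union>Cl"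
  shows "card (strips_on St p a (Suc t)) + card (strips_on St p (Suc t) b) \<le> card (strips_on St p a b)"
proof -
  have "strips_on St p a (Suc t) \<inter> strips_on St p (Suc t) b = {}"
  proof (rule ccontr)
    assume "strips_on St p a (Suc t) \<inter> strips_on St p (Suc t) b \<noteq> {}"
    then obtain P x z where P: "P \<in> St" "x < Suc t" "Suc t \<le> z" "z < b" "p x \<in> set P" "p z \<in> set P"
      unfolding strips_on_def by auto
    then have "p t \<in> set P"
      using strips_contiguous[of P x t z] assms(3) by (cases "x = t") auto
    then show False using assms(4) clusters_avoid_strips[OF _ \<open>P \<in> St\<close>] by blast
  qed
  moreover have "strips_on St p a (Suc t) \<union> strips_on St p (Suc t) b \<subseteq> strips_on St p a b"
    using assms(1,2) by (auto simp: strips_on_def)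
  ultimately show ?thesis
    using finite_St card_mono[of "strips_on St p a b"]
    by (simp add: strips_on_def card_Un_disjoint[symmetric])
qed

text \<open>\<open>N\<close> counts the long segments of the greedy cut; every other segment meets more than \<open>m\<close>
  strips of its own.\<close>
lemma long_segments_exist:
  assumes "a \<le> b" "b \<le> n"
  shows "\<exists>N. card (clusters_on Cl p a b) < m * Suc N + card (strips_on St p a b) \<and> (d + 2) * N \<le> b - a"
  using assms
proof (induction "b - a" arbitrary: a rule: less_induct)
  case less
  define F g where "F = card (clusters_on Cl p a b)" and "g = card (strips_on St p a b)"
  show ?case
  proof (cases "m \<le> F")
    case False
    then show ?thesis by (intro exI[of _ 0]) (simp add: F_def)
  next
    case True
    then obtain t where t: "a \<le> t" "t < b" "card (clusters_on Cl p a (Suc t)) = m" "p t \<in> \<Union>Cl"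
      using exists_prefix_meeting_clusters[OF finite_Cl disjoint_Cl m_pos] unfolding F_def by blast
    define FR gA gR where "FR = card (clusters_on Cl p (Suc t) b)"
      and "gA = card (strips_on St p a (Suc t))" and "gR = card (strips_on St p (Suc t) b)"
    have "\<exists>N. FR < m * Suc N + gR \<and> (d + 2) * N \<le> b - Suc t"
      unfolding FR_def gR_def using t less.prems by (intro less.hyps) auto
    then obtain N where N: "FR < m * Suc N + gR" "(d + 2) * N \<le> b - Suc t"
      by blast
    have "F \<le> m + FR"
      using clusters_on_split[of a "Suc t" b Cl p] card_Un_le t unfolding F_def FR_def by fastforce
    moreover have "gA + gR \<le> g"
      using card_strips_on_separated t less.prems unfolding gA_def gR_def g_def by blast
    show ?thesis
    proof (cases "gA \<le> m")
      case True
      then have "d + 2 \<le> Suc t - a"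
        using saturated t less.prems unfolding gA_def by simp
      then show ?thesis
        using N \<open>F \<le> m + FR\<close> \<open>gA + gR \<le> g\<close> t
        by (intro exI[of _ "Suc N"]) (simp add: F_def g_def algebra_simps)
    next
      case False
      then show ?thesis
        using N \<open>F \<le> m + FR\<close> \<open>gA + gR \<le> g\<close> t
        by (intro exI[of _ N]) (simp add: F_def g_def)
    qed
  qed
qed

lemma clusters_times_distance_le:
  assumes "m \<le> card (clusters_on Cl p 0 n)"
    and "2 * card (strips_on St p 0 n) < card (clusters_on Cl p 0 n)"
  shows "card (clusters_on Cl p 0 n) * d \<le> 4 * m * (n - 1)"
proof -
  define k s where "k = card (clusters_on Cl p 0 n)" and "s = card (strips_on St p 0 n)"
  show ?thesis
  proof (cases "k < 2 * m")
    case True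
    obtain t where t: "t < n" "card (clusters_on Cl p 0 (Suc t)) = m" "p t \<in> \<Union>Cl"
      using exists_prefix_meeting_clusters[OF finite_Cl disjoint_Cl m_pos assms(1)] by blast
    have "card (strips_on St p 0 (Suc t)) \<le> s"
      using card_strips_on_separated[of 0 t n] t unfolding s_def by simp
    then have "d + 2 \<le> Suc t"
      using saturated[of 0 "Suc t"] t True assms(2) unfolding k_def s_def by simp
    then have "k * d \<le> 2 * m * (n - 1)"
      using True t(1) by (intro mult_le_mono) auto
    then show ?thesis unfolding k_def by simp
  next
    case False
    obtain N where N: "k < m * Suc N + s" "(d + 2) * N \<le> n"
      using long_segments_exist[of 0 n] unfolding k_def s_def by auto
    have "k < 2 * m * Suc N"
      using N(1) assms(2) unfolding k_def s_def by simp
    then have "1 \<le> N" using False by (cases N) auto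
    have "k * d \<le> 2 * m * Suc N * d" using \<open>k < 2 * m * Suc N\<close> by simp
    also have "\<dots> \<le> 4 * m * (N * d)" using \<open>1 \<le> N\<close> by (simp add: algebra_simps)
    also have "\<dots> \<le> 4 * m * (n - 1)"
      using N(2) \<open>1 \<le> N\<close> by (intro mult_le_mono2) (simp add: algebra_simps)
    finally show ?thesis unfolding k_def .
  qed
qed

end

lemma walk_take_drop:
  assumes "walk V E q" "i \<le> j" "j < length q"
  shows "walk V E (take (Suc (j - i)) (drop i q))"
  unfolding walk_def
proof (intro conjI allI impI)
  show "take (Suc (j - i)) (drop i q) \<noteq> []" using assms by simp
  show "set (take (Suc (j - i)) (drop i q)) \<subseteq> V"
    using assms(1) unfolding walk_def by (meson order_trans set_drop_subset set_take_subset)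
  fix l assume l: "Suc l < length (take (Suc (j - i)) (drop i q))"
  then have "Suc (i + l) < length q" by (simp add: less_diff_conv)
  then have "E (q ! (i + l)) (q ! Suc (i + l))"
    using assms(1) unfolding walk_def by blast
  then show "E (take (Suc (j - i)) (drop i q) ! l) (take (Suc (j - i)) (drop i q) ! Suc l)"
    using l assms(2,3) by simp
qed

lemma set_take_drop_eq_image_nth:
  assumes "i \<le> j" "j < length q"
  shows "set (take (Suc (j - i)) (drop i q)) = (!) q ` {i..j}"
proof -
  have "set (take (Suc (j - i)) (drop i q)) = (!) (drop i q) ` {0..<Suc (j - i)}"
    using assms by (intro nth_image[symmetric]) simp
  also have "\<dots> = (!) q ` (+) i ` {0..<Suc (j - i)}"
    using assms unfolding image_image by simp
  also have "(+) i ` {0..<Suc (j - i)} = {i..j}"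
    using assms by (simp add: atLeastLessThanSuc_atLeastAtMost)
  finally show ?thesis .
qed

lemma gdist_nth_le:
  assumes "walk V E q" "i \<le> j" "j < length q"
  shows "gdist V E (q ! i) (q ! j) \<le> enat (j - i)"
proof -
  let ?r = "take (Suc (j - i)) (drop i q)"
  have "length ?r = Suc (j - i)" using assms(2,3) by simp
  then have "hd ?r = q ! i" "last ?r = q ! j" "length ?r - 1 = j - i"
    using assms(2,3) by (auto simp: hd_conv_nth last_conv_nth simp del: length_take)
  then show ?thesis
    using walk_take_drop[OF assms] unfolding gdist_def by (intro INF_lower2[of ?r]) auto
qed

lemma sp_systemD:
  assumes "sp_system V E rho" "u \<in> V" "v \<in> V" "gdist V E u v \<noteq> \<infinity>"
  shows "walk V E (rho u v)"
    and "enat (length (rho u v) - 1) = gdist V E u v"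
    and "rho v u = rev (rho u v)"
    and "\<And>i j. i \<le> j \<Longrightarrow> j < length (rho u v) \<Longrightarrow>
      rho (rho u v ! i) (rho u v ! j) = take (Suc (j - i)) (drop i (rho u v))"
  using assms unfolding sp_system_def by blast+

lemma set_rho_nth:
  assumes "sp_system V E rho" "u \<in> V" "v \<in> V" "gdist V E u v \<noteq> \<infinity>"
    and "i \<le> j" "j < length (rho u v)"
  shows "set (rho (rho u v ! i) (rho u v ! j)) = (!) (rho u v) ` {i..j}"
  using sp_systemD(4)[OF assms] set_take_drop_eq_image_nth[OF assms(5,6)] by simp

lemma set_rho_subset:
  assumes sp: "sp_system V E rho" and uv: "u \<in> V" "v \<in> V" "gdist V E u v \<noteq> \<infinity>"
    and "x \<in> set (rho u v)" "y \<in> set (rho u v)"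
  shows "set (rho x y) \<subseteq> set (rho u v)"
proof -
  let ?q = "rho u v"
  have ordered: "set (rho (?q ! i) (?q ! j)) \<subseteq> set ?q" if "i \<le> j" "j < length ?q" for i j
    using set_rho_nth[OF sp uv that] that by auto
  obtain i j where ij: "i < length ?q" "x = ?q ! i" "j < length ?q" "y = ?q ! j"
    using assms(5,6) by (metis in_set_conv_nth)
  show ?thesis
  proof (cases "i \<le> j")
    case True
    then show ?thesis using ordered ij by simp
  next
    case False
    have "walk V E ?q" by (rule sp_systemD(1)[OF sp uv])
    then have "?q ! j \<in> V" "?q ! i \<in> V" "gdist V E (?q ! j) (?q ! i) \<noteq> \<infinity>"
      using ij False gdist_nth_le[of V E ?q j i] unfolding walk_def
      by (auto dest: enat_ile)
    then have "rho x y = rev (rho (?q ! j) (?q ! i))"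
      using sp_systemD(3)[OF sp] ij by simp
    then show ?thesis using ordered[of j i] ij False by simp
  qed
qed

lemma rho_meets_rho_contiguously:
  assumes sp: "sp_system V E rho"
    and uv: "u \<in> V" "v \<in> V" "gdist V E u v \<noteq> \<infinity>"
    and uv': "u' \<in> V" "v' \<in> V" "gdist V E u' v' \<noteq> \<infinity>"
    and "x \<le> y" "y \<le> z" "z < length (rho u v)"
    and "rho u v ! x \<in> set (rho u' v')" "rho u v ! z \<in> set (rho u' v')"
  shows "rho u v ! y \<in> set (rho u' v')"
proof -
  have "rho u v ! y \<in> set (rho (rho u v ! x) (rho u v ! z))"
    using set_rho_nth[OF sp uv, of x z] assms(8-10) by auto
  then show ?thesis
    using set_rho_subset[OF sp uv' assms(11,12)] by blast
qed

lemma cluster_output_finite_disjoint: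
  assumes "cluster_output V E e Cs"
  shows "finite Cs" and "disjoint Cs"
proof -
  obtain cl where cl: "\<forall>i < length cl. \<exists>u N.
      u \<in> V - \<Union>(set (take i cl)) \<and> N \<subseteq> {w \<in> V. E u w} - \<Union>(set (take i cl)) \<and>
      card N = e - 1 \<and> cl ! i = insert u N" "Cs = set cl"
    using assms unfolding cluster_output_def by blast
  show "finite Cs" using cl(2) by simp
  have earlier: "disjnt (cl ! i) (cl ! j)" if "i < j" "j < length cl" for i j
  proof -
    have "cl ! j \<inter> \<Union>(set (take j cl)) = {}" using cl(1) that(2) by fastforce
    moreover have "cl ! i \<in> set (take j cl)" using that by (auto simp: in_set_conv_nth)
    ultimately show ?thesis by (auto simp: disjnt_def)
  qed
  show "disjoint Cs"
    unfolding cl(2) pairwise_def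
    by (metis earlier disjnt_sym in_set_conv_nth linorder_neqE_nat)
qed

lemma strips_outputD:
  assumes "strips_output V E rho Cs d m S"
  shows "finite S"
    and "P \<in> S \<Longrightarrow> \<exists>u v. u \<in> V \<and> v \<in> V \<and> gdist V E u v \<le> enat d \<and> P = rho u v"
    and "\<not> strip_addable V E rho Cs d m S x y"
proof -
  obtain sl where sl: "\<forall>i < length sl. \<exists>u v. strip_addable V E rho Cs d m (set (take i sl)) u v \<and> sl ! i = rho u v"
    "\<not> (\<exists>u v. strip_addable V E rho Cs d m (set sl) u v)" "S = set sl"
    using assms unfolding strips_output_def by blast
  show "finite S" and "\<not> strip_addable V E rho Cs d m S x y" using sl(2,3) by auto
  assume "P \<in> S"
  then show "\<exists>u v. u \<in> V \<and> v \<in> V \<and> gdist V E u v \<le> enat d \<and> P = rho u v"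
    using sl(1,3) unfolding strip_addable_def by (metis in_set_conv_nth)
qed

lemma strips_output_subpath_long:
  assumes sp: "sp_system V E rho" and so: "strips_output V E rho Cs d m S"
    and uv: "u \<in> V" "v \<in> V" "gdist V E u v \<noteq> \<infinity>"
    and ab: "a < b" "b \<le> length (rho u v)"
    and clusters: "card (clusters_on {C \<in> Cs. clean S C} ((!) (rho u v)) a b) = m"
    and strips: "card (strips_on S ((!) (rho u v)) a b) \<le> m"
  shows "d + 2 \<le> b - a"
proof (rule ccontr)
  assume short: "\<not> d + 2 \<le> b - a"
  let ?q = "rho u v"
  let ?x = "?q ! a" and ?y = "?q ! (b - 1)"
  have walk: "walk V E ?q" by (rule sp_systemD(1)[OF sp uv])
  then have xy: "?x \<in> V" "?y \<in> V"
    using ab unfolding walk_def by auto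
  have "gdist V E ?x ?y \<le> enat (b - 1 - a)"
    using gdist_nth_le[OF walk, of a "b - 1"] ab by simp
  also have "\<dots> \<le> enat d" using short by simp
  finally have close: "gdist V E ?x ?y \<le> enat d" .
  have "{a..b - 1} = {a..<b}" using ab by auto
  then have nodes: "set (rho ?x ?y) = (!) ?q ` {a..<b}"
    using set_rho_nth[OF sp uv, of a "b - 1"] ab by simp
  have "{P \<in> S. set (rho ?x ?y) \<inter> set P \<noteq> {}} = strips_on S ((!) ?q) a b"
    and "{C \<in> Cs. C \<inter> set (rho ?x ?y) \<noteq> {} \<and> (\<forall>P\<in>S. C \<inter> set P = {})}
      = clusters_on {C \<in> Cs. clean S C} ((!) ?q) a b"
    unfolding nodes strips_on_def clusters_on_def clean_def by blast+
  with xy close clusters strips have "strip_addable V E rho Cs d m S ?x ?y"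
    unfolding strip_addable_def by simp
  then show False using strips_outputD(3)[OF so] by blast
qed

lemma saturated_path_rho:
  assumes sp: "sp_system V E rho" and co: "cluster_output V E e Cs"
    and so: "strips_output V E rho Cs d m S" and "0 < m"
    and uv: "u \<in> V" "v \<in> V" "gdist V E u v \<noteq> \<infinity>"
  shows "saturated_path ((!) (rho u v)) (length (rho u v)) {C \<in> Cs. clean S C} S m d"
proof
  show "finite {C \<in> Cs. clean S C}" using cluster_output_finite_disjoint(1)[OF co] by simp
  show "disjoint {C \<in> Cs. clean S C}"
    using cluster_output_finite_disjoint(2)[OF co] by (rule pairwise_subset) auto
  show "finite S" by (rule strips_outputD(1)[OF so])
  show "C \<inter> set P = {}" if "C \<in> {C \<in> Cs. clean S C}" "P \<in> S" for C P
    using that by (simp add: clean_def)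
  show "rho u v ! y \<in> set P"
    if P: "P \<in> S" "x < y" "y < z" "z < length (rho u v)" "rho u v ! x \<in> set P" "rho u v ! z \<in> set P"
    for P x y z
  proof -
    obtain u' v' where "u' \<in> V" "v' \<in> V" "gdist V E u' v' \<le> enat d" "P = rho u' v'"
      using strips_outputD(2)[OF so P(1)] by blast
    then show ?thesis
      using rho_meets_rho_contiguously[OF sp uv, of u' v' x y z] P by (auto dest: enat_ile)
  qed
  show "d + 2 \<le> b - a"
    if "a < b" "b \<le> length (rho u v)" "card (clusters_on {C \<in> Cs. clean S C} ((!) (rho u v)) a b) = m"
      "card (strips_on S ((!) (rho u v)) a b) \<le> m" for a b
    using strips_output_subpath_long[OF sp so uv that] .
  show "0 < m" by fact
qed

theorem lemma3:
  shows "\<exists>c::real. c > 0 \<and>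
    (\<forall>V E rho (e::nat) (d::nat) (m::nat) Cs S u v (k::nat).
      sgraph V E \<and> sp_system V E rho \<and> e \<ge> 1 \<and> d \<ge> 1 \<and> m \<ge> 1 \<and> m \<le> k \<and>
      cluster_output V E e Cs \<and> strips_output V E rho Cs d m S \<and>
      u \<in> V \<and> v \<in> V \<and>
      card {C \<in> Cs. C \<inter> set (rho u v) \<noteq> {} \<and> clean S C} = k \<and>
      real (card {P \<in> S. set P \<inter> set (rho u v) \<noteq> {}}) < real k / 2
      \<longrightarrow> (\<forall>l. gdist V E u v = enat l \<longrightarrow> real l \<ge> c * real k * real d / real m))"
proof (intro exI[of _ "1/4"] conjI allI impI)
  fix V E rho e d m Cs S u v k l
  assume H: "sgraph V E \<and> sp_system V E rho \<and> e \<ge> 1 \<and> d \<ge> 1 \<and> m \<ge> 1 \<and> m \<le> k \<and>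
      cluster_output V E e Cs \<and> strips_output V E rho Cs d m S \<and> u \<in> V \<and> v \<in> V \<and>
      card {C \<in> Cs. C \<inter> set (rho u v) \<noteq> {} \<and> clean S C} = k \<and>
      real (card {P \<in> S. set P \<inter> set (rho u v) \<noteq> {}}) < real k / 2"
    and dist: "gdist V E u v = enat l"
  let ?q = "rho u v" and ?Cl = "{C \<in> Cs. clean S C}"
  have sp: "sp_system V E rho" and co: "cluster_output V E e Cs"
    and so: "strips_output V E rho Cs d m S" and m_bounds: "1 \<le> m" "m \<le> k"
    and uv: "u \<in> V" "v \<in> V" "gdist V E u v \<noteq> \<infinity>"
    using H dist by auto
  interpret saturated_path "(!) ?q" "length ?q" ?Cl S m d
    using saturated_path_rho[OF sp co so _ uv] m_bounds by simp
  have path_nodes: "(!) ?q ` {0..<length ?q} = set ?q" by (simp add: nth_image)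
  have "clusters_on ?Cl ((!) ?q) 0 (length ?q) = {C \<in> Cs. C \<inter> set ?q \<noteq> {} \<and> clean S C}"
    unfolding clusters_on_def path_nodes by blast
  moreover have "strips_on S ((!) ?q) 0 (length ?q) = {P \<in> S. set P \<inter> set ?q \<noteq> {}}"
    unfolding strips_on_def path_nodes ..
  moreover have "2 * card {P \<in> S. set P \<inter> set ?q \<noteq> {}} < k"
    using H by linarith
  moreover have "l = length ?q - 1"
    using sp_systemD(2)[OF sp uv] dist by simp
  ultimately have "k * d \<le> 4 * m * l"
    using clusters_times_distance_le H by simp
  then have "real k * real d \<le> 4 * real m * real l"
    by (metis of_nat_le_iff of_nat_mult of_nat_numeral)
  then show "1/4 * real k * real d / real m \<le> real l"
    using m_bounds by (simp add: divide_le_eq mult.commute mult.left_commute)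
qed simp

end
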